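(* Let $n$ be even and consider the bi-party bi-objective pseudo-Boolean problem BPAOAZ on $\{0,1\}^n$ (defined in the context), whose common Pareto set is $\{1^n\}$. The expected running time of the simple evolutionary multi-party multi-objective optimizer $\text{EMPMO}_{\text{simple}}$ (with $M=2$ parties) applied to BPAOAZ is bounded by $O(3n^2\log n)$.
   Context: BPAOAZ: for $\mathbf{x}=(x_1,\dots,x_n)\in\{0,1\}^n$ with $n$ even, party 1 has the two objectives $f_{11}(\mathbf{x})=\sum_{i=n/2+1}^{n}x_i$ and $f_{12}(\mathbf{x})=\sum_{i=1}^{n/2}x_i+\sum_{i=n/2+1}^{n}(1-x_i)$; party 2 has the two objectives $f_{21}(\mathbf{x})=\sum_{i=1}^{n/2}(1-x_i)+\sum_{i=n/2+1}^{n}x_i$ and $f_{22}(\mathbf{x})=\sum_{i=1}^{n/2}x_i$. All objectives are to be maximized. Write $F_m=(f_{m1},f_{m2})$. For party $m$, $\mathbf{z}$ weakly dominates $\mathbf{x}$ ($\mathbf{z}\succeq_m\mathbf{x}$) if $f_{mk}(\mathbf{z})\ge f_{mk}(\mathbf{x})$ for $k=1,2$, and dominates it ($\mathbf{z}\succ_m\mathbf{x}$) if additionally strict inequality holds for some $k$. The Pareto set of party $m$ is the set of $\mathbf{x}$ not dominated (w.r.t. $\succ_m$) by any point of $\{0,1\}^n$; the common Pareto set is the intersection of the two parties' Pareto sets. One-bit mutation flips one uniformly random bit. $\text{EMPMO}_{\text{simple}}$: choose $\mathbf{x}$ uniformly at random from $\{0,1\}^n$; set $\Phi=\{\mathbf{x}\}$,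 $P_1=P_2=\{\mathbf{x}\}$. In each iteration, for $m=1,2$ in turn: pick $\mathbf{x}\in P_m$ uniformly at random and apply one-bit mutation to get $\mathbf{x}'$; if there is no $\mathbf{z}\in P_m$ with $\mathbf{z}\succ_m\mathbf{x}'$ or $F_m(\mathbf{z})=F_m(\mathbf{x}')$, then set $P_m\leftarrow (P_m\setminus\{\mathbf{z}\in P_m:\mathbf{x}'\succ_m\mathbf{z}\})\cup\{\mathbf{x}'\}$, and moreover, if there is no $\mathbf{z}\in\Phi$ such that for all parties $m'$ ($\mathbf{z}\succ_{m'}\mathbf{x}'$ or $F_{m'}(\mathbf{z})=F_{m'}(\mathbf{x}')$), set $\Phi\leftarrow(\Phi\setminus\{\mathbf{z}\in\Phi:\exists m''\ \mathbf{x}'\succ_{m''}\mathbf{z}\})\cup\{\mathbf{x}'\}$. The running time is the number of fitness evaluations (i.e. mutations, counting both parties' mutations) until the common Pareto-optimal solutions are found for the first time. *)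

theory Defs
  imports "HOL-Probability.Probability"
begin

text \<open>Bit strings x = (x_1,...,x_n) are boolean lists of length n; x_i is x ! (i-1),
  so the first half is the index set {..<n div 2} and the second half {n div 2..<n}.\<close>

type_synonym bits = "bool list"

definition f11 :: "nat \<Rightarrow> bits \<Rightarrow> nat" where
  "f11 n x = (\<Sum>i\<in>{n div 2..<n}. of_bool (x ! i))"

definition f12 :: "nat \<Rightarrow> bits \<Rightarrow> nat" where
  "f12 n x = (\<Sum>i<n div 2. of_bool (x ! i)) + (\<Sum>i\<in>{n div 2..<n}. of_bool (\<not> x ! i))"

definition f21 :: "nat \<Rightarrow> bits \<Rightarrow> nat" where
  "f21 n x = (\<Sum>i<n div 2. of_bool (\<not> x ! i)) + (\<Sum>i\<in>{n div 2..<n}. of_bool (x ! i))"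

definition f22 :: "nat \<Rightarrow> bits \<Rightarrow> nat" where
  "f22 n x = (\<Sum>i<n div 2. of_bool (x ! i))"

definition F :: "nat \<Rightarrow> nat \<Rightarrow> bits \<Rightarrow> nat \<times> nat" where
  "F n m x = (if m = 1 then (f11 n x, f12 n x) else (f21 n x, f22 n x))"

definition parties :: "nat set" where "parties = {1, 2}"

definition weakly_dom :: "nat \<Rightarrow> nat \<Rightarrow> bits \<Rightarrow> bits \<Rightarrow> bool" where
  "weakly_dom n m z x \<longleftrightarrow> fst (F n m z) \<ge> fst (F n m x) \<and> snd (F n m z) \<ge> snd (F n m x)"

definition dom :: "nat \<Rightarrow> nat \<Rightarrow> bits \<Rightarrow> bits \<Rightarrow> bool" where
  "dom n m z x \<longleftrightarrow> weakly_dom n m z x \<and>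
     (fst (F n m z) > fst (F n m x) \<or> snd (F n m z) > snd (F n m x))"

definition search_space :: "nat \<Rightarrow> bits set" where
  "search_space n = {x. length x = n}"

definition pareto_set :: "nat \<Rightarrow> nat \<Rightarrow> bits set" where
  "pareto_set n m = {x \<in> search_space n. \<not> (\<exists>z \<in> search_space n. dom n m z x)}"

definition common_pareto :: "nat \<Rightarrow> bits set" where
  "common_pareto n = (\<Inter>m\<in>parties. pareto_set n m)"

definition mutate :: "nat \<Rightarrow> bits \<Rightarrow> bits pmf" where
  "mutate n x = map_pmf (\<lambda>i. x[i := \<not> x ! i]) (pmf_of_set {..<n})"

text \<open>Algorithm state: (archive Phi, population P_1, population P_2).\<close>
type_synonym state = "bits set \<times> bits set \<times> bits set"

definition archive :: "state \<Rightarrow> bits set" where "archive s = fst s"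

definition pop :: "nat \<Rightarrow> state \<Rightarrow> bits set" where
  "pop m s = (if m = 1 then fst (snd s) else snd (snd s))"

definition set_pop :: "nat \<Rightarrow> bits set \<Rightarrow> state \<Rightarrow> state" where
  "set_pop m P s = (if m = 1 then (fst s, P, snd (snd s)) else (fst s, fst (snd s), P))"

definition update :: "nat \<Rightarrow> nat \<Rightarrow> bits \<Rightarrow> state \<Rightarrow> state" where
  "update n m x' s =
    (if \<not> (\<exists>z \<in> pop m s. dom n m z x' \<or> F n m z = F n m x') then
       (let s1 = set_pop m ({z \<in> pop m s. \<not> dom n m x' z} \<union> {x'}) s;
            Phi = archive s;
            Phi' = (if \<not> (\<exists>z \<in> Phi. \<forall>m'\<in>parties. dom n m' z x' \<or> F n m' z = F n m' x')
                    then {z \<in> Phi. \<not> (\<exists>m''\<in>parties. dom n m'' x' z)} \<union> {x'}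
                    else Phi)
        in (Phi', snd s1))
     else s)"

definition party_step :: "nat \<Rightarrow> nat \<Rightarrow> state \<Rightarrow> state pmf" where
  "party_step n m s =
     bind_pmf (pmf_of_set (pop m s)) (\<lambda>x. map_pmf (\<lambda>x'. update n m x' s) (mutate n x))"

definition found :: "nat \<Rightarrow> state \<Rightarrow> bool" where
  "found n s \<longleftrightarrow> common_pareto n \<subseteq> archive s"

text \<open>Joint distribution of the state after t fitness evaluations together with the flag
  "the common Pareto set has been found at some evaluation count \<le> t".
  Evaluation number t+1 is made by party 1 if t is even and by party 2 otherwise
  (each iteration = party 1's mutation followed by party 2's mutation).\<close>
fun evals :: "nat \<Rightarrow> nat \<Rightarrow> (state \<times> bool) pmf" where
  "evals n 0 = map_pmf (\<lambda>x. (({x}, {x}, {x}), found n ({x}, {x}, {x})))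
                 (pmf_of_set (search_space n))"
| "evals n (Suc t) = bind_pmf (evals n t) (\<lambda>(s, h).
      map_pmf (\<lambda>s'. (s', h \<or> found n s')) (party_step n (if even t then 1 else 2) s))"

text \<open>Expected running time E[T] of the first hitting time T (number of evaluations),
  via the tail-sum formula E[T] = sum_{t>=0} Pr[T > t] (valued in ennreal, so = \<infinity>
  if T is infinite with positive probability).\<close>
definition expected_runtime :: "nat \<Rightarrow> ennreal" where
  "expected_runtime n = (\<Sum>t. ennreal (measure_pmf.prob (evals n t) {p. \<not> snd p}))"

end

theory Submission
  imports Defs
begin

(* Only the population P of party 1 matters.  Let a and b count the ones in the first and
   in the second half of a bit string (a = f22, b = f11).  Weak dominance for party 1 never
   decreases a, and for party 1 no point dominates a point with a = n/2.  Hence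
   A = max a over P never decreases and, once A = n/2, neither does the largest value B of b
   on the points of P with a = n/2.  From a point realising A (resp. B) each of the n/2 - A
   (resp. n/2 - B) flips of a zero bit in the corresponding half is accepted and raises A
   (resp. B), and P, an antichain with distinct objective vectors, has at most n/2 + 1
   elements.  So the potential c (H(n/2 - A) + H(n/2 - B)), H the harmonic numbers and
   c = 2 n (n/2 + 1), drops by at least 2 in expectation with every mutation of party 1
   until 1^n enters P, and then 1^n, the only common Pareto optimum, is in the archive.
   Additive drift over the alternating mutations gives E[T] <= 2 c H(n/2) = O(n^2 log n). *)

section \<open>The objectives in terms of the two halves\<close>

lemma sum_of_bool_add_not:
  "finite S \<Longrightarrow> (\<Sum>i\<in>S. of_bool (P i) :: nat) + (\<Sum>i\<in>S. of_bool (\<not> P i)) = card S"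
  by (induction S rule: finite_induct) (auto simp del: sum_of_bool_eq)

lemma f11_le: "f11 n x \<le> n - n div 2"
  using sum_of_bool_add_not[of "{n div 2..<n}" "\<lambda>i. x ! i"]
  unfolding f11_def by (simp del: sum_of_bool_eq)

lemma f22_le: "f22 n x \<le> n div 2"
  using sum_of_bool_add_not[of "{..<n div 2}" "\<lambda>i. x ! i"]
  unfolding f22_def by (simp del: sum_of_bool_eq)

lemma f12_eq: "f12 n x = f22 n x + (n - n div 2 - f11 n x)"
  unfolding f12_def f22_def f11_def
  using sum_of_bool_add_not[of "{n div 2..<n}" "\<lambda>i. x ! i"] by (simp del: sum_of_bool_eq; arith)

lemma f21_eq: "f21 n x = (n div 2 - f22 n x) + f11 n x"
  unfolding f21_def f22_def f11_def
  using sum_of_bool_add_not[of "{..<n div 2}" "\<lambda>i. x ! i"] by (simp del: sum_of_bool_eq; arith)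

lemma sum_of_bool_set_True:
  assumes "finite S" "i \<in> S" "i < length x" "\<not> x ! i"
  shows "(\<Sum>j\<in>S. of_bool (x[i := True] ! j) :: nat) = (\<Sum>j\<in>S. of_bool (x ! j)) + 1"
proof -
  have "S \<inter> {j. x[i := True] ! j} = insert i (S \<inter> {j. x ! j})"
    using assms by (auto simp: nth_list_update)
  then show ?thesis using assms by simp
qed

lemma sum_of_bool_update_outside:
  "i \<notin> S \<Longrightarrow> (\<Sum>j\<in>S. of_bool (x[i := v] ! j) :: nat) = (\<Sum>j\<in>S. of_bool (x ! j))"
  by (intro sum.cong refl) (metis nth_list_update_neq)

lemma flip_first_half:
  assumes "i < n div 2" "length x = n" "\<not> x ! i"
  shows "f22 n (x[i := True]) = f22 n x + 1" "f11 n (x[i := True]) = f11 n x"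
  using assms sum_of_bool_set_True[of "{..<n div 2}" i x]
    sum_of_bool_update_outside[of i "{n div 2..<n}" x True]
  unfolding f22_def f11_def by auto

lemma flip_second_half:
  assumes "n div 2 \<le> i" "i < n" "length x = n" "\<not> x ! i"
  shows "f11 n (x[i := True]) = f11 n x + 1" "f22 n (x[i := True]) = f22 n x"
  using assms sum_of_bool_set_True[of "{n div 2..<n}" i x]
    sum_of_bool_update_outside[of i "{..<n div 2}" x True]
  unfolding f22_def f11_def by auto

lemma f22_f11_max_iff_all_ones:
  assumes "length z = n"
  shows "f22 n z = n div 2 \<and> f11 n z = n - n div 2 \<longleftrightarrow> z = replicate n True"
proof
  assume max: "f22 n z = n div 2 \<and> f11 n z = n - n div 2"
  have "{..<n div 2} \<inter> {j. z ! j} = {..<n div 2}"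
    using max by (intro card_subset_eq) (auto simp: f22_def)
  moreover have "{n div 2..<n} \<inter> {j. z ! j} = {n div 2..<n}"
    using max by (intro card_subset_eq) (auto simp: f11_def)
  ultimately have "z ! j" if "j < n" for j
    using that by (cases "j < n div 2") auto
  then show "z = replicate n True"
    using assms by (intro nth_equalityI) auto
qed (simp add: f11_def f22_def)

lemma weakly_dom_if_dom_or_F_eq: "dom n m z x \<or> F n m z = F n m x \<Longrightarrow> weakly_dom n m z x"
  unfolding dom_def weakly_dom_def by auto

lemma f22_le_if_weakly_dom_1: "weakly_dom n 1 z x \<Longrightarrow> f22 n x \<le> f22 n z"
  using f11_le[of n x] f11_le[of n z] unfolding weakly_dom_def F_def f12_eq by auto

lemma not_dom_1_if_f22_max: "f22 n z = n div 2 \<Longrightarrow> \<not> dom n 1 x z"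
  using f11_le[of n x] f11_le[of n z] f22_le[of n x]
  unfolding dom_def weakly_dom_def F_def f12_eq by (auto; arith)

lemma not_dom_all_ones: "\<not> dom n m x (replicate n True)"
  using f11_le[of n x] f22_le[of n x] f22_f11_max_iff_all_ones[of "replicate n True" n]
  unfolding dom_def weakly_dom_def F_def f12_eq f21_eq by auto

lemma common_pareto_subset: "common_pareto n \<subseteq> {replicate n True}"
proof
  fix x assume "x \<in> common_pareto n"
  then have p1: "x \<in> pareto_set n 1" and p2: "x \<in> pareto_set n 2"
    unfolding common_pareto_def parties_def by auto
  then have len: "length x = n" by (simp add: pareto_set_def search_space_def)
  have "x ! i" if i: "i < n" for i
  proof (rule ccontr)
    assume zero: "\<not> x ! i"
    have flipped: "x[i := True] \<in> search_space n" using len by (simp add: search_space_def)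
    show False
    proof (cases "i < n div 2")
      case True
      then have "dom n 1 (x[i := True]) x"
        using flip_first_half[OF True len zero] unfolding dom_def weakly_dom_def F_def f12_eq by auto
      then show False using p1 flipped by (auto simp: pareto_set_def)
    next
      case False
      then have "dom n 2 (x[i := True]) x"
        using flip_second_half[of n i x] i len zero f22_le[of n x]
        unfolding dom_def weakly_dom_def F_def f21_eq by auto
      then show False using p2 flipped by (auto simp: pareto_set_def)
    qed
  qed
  then show "x \<in> {replicate n True}" using len by (auto intro: nth_equalityI)
qed

section \<open>Invariants of the algorithm\<close>

definition accepts :: "nat \<Rightarrow> nat \<Rightarrow> bits \<Rightarrow> state \<Rightarrow> bool" where
  "accepts n m x' s \<longleftrightarrow> \<not> (\<exists>z \<in> pop m s. dom n m z x' \<or> F n m z = F n m x')"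

definition archive_insert :: "nat \<Rightarrow> bits \<Rightarrow> bits set \<Rightarrow> bits set" where
  "archive_insert n x' Phi =
     (if \<not> (\<exists>z \<in> Phi. \<forall>m'\<in>parties. dom n m' z x' \<or> F n m' z = F n m' x')
      then {z \<in> Phi. \<not> (\<exists>m''\<in>parties. dom n m'' x' z)} \<union> {x'}
      else Phi)"

lemma pop_update:
  assumes "m \<in> {1, 2}" "m' \<in> {1, 2}"
  shows "pop m' (update n m x' s) =
    (if m' = m \<and> accepts n m x' s then {z \<in> pop m s. \<not> dom n m x' z} \<union> {x'} else pop m' s)"
  using assms unfolding update_def accepts_def Let_def by (auto simp: pop_def set_pop_def)

lemma archive_update:
  "archive (update n m x' s) =
    (if accepts n m x' s then archive_insert n x' (archive s) else archive s)"
  unfolding update_def accepts_def Let_def archive_insert_def by (auto simp: archive_def set_pop_def)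

lemma archive_insert_subset: "archive_insert n x' Phi \<subseteq> insert x' Phi"
  unfolding archive_insert_def by auto

lemma all_ones_mem_archive_insert:
  assumes "Phi \<subseteq> search_space n" "replicate n True \<in> insert x' Phi"
  shows "replicate n True \<in> archive_insert n x' Phi"
proof (cases "x' = replicate n True")
  case True
  have "z = x'" if "z \<in> Phi" "\<forall>m'\<in>parties. dom n m' z x' \<or> F n m' z = F n m' x'" for z
  proof -
    have "F n 1 z = F n 1 x'" "F n 2 z = F n 2 x'"
      using that(2) True not_dom_all_ones unfolding parties_def by auto
    then have "f22 n z = n div 2 \<and> f11 n z = n - n div 2"
      using True f22_f11_max_iff_all_ones[of "replicate n True" n] by (simp add: F_def)
    then show "z = x'"
      using that(1) assms(1) True f22_f11_max_iff_all_ones[of z n] by (auto simp: search_space_def)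
  qed
  then show ?thesis using True unfolding archive_insert_def by auto
next
  case False
  then show ?thesis using assms(2) not_dom_all_ones unfolding archive_insert_def by auto
qed

definition wf_state :: "nat \<Rightarrow> state \<Rightarrow> bool" where
  "wf_state n s \<longleftrightarrow>
     (\<forall>m\<in>{1, 2}. finite (pop m s) \<and> pop m s \<noteq> {} \<and> pop m s \<subseteq> search_space n) \<and>
     archive s \<subseteq> search_space n \<and>
     (\<forall>z\<in>pop 1 s. \<forall>w\<in>pop 1 s. z \<noteq> w \<longrightarrow> F n 1 z \<noteq> F n 1 w \<and> \<not> dom n 1 z w) \<and>
     (replicate n True \<in> pop 1 s \<longrightarrow> replicate n True \<in> archive s)"

lemma wf_state_pop:
  "wf_state n s \<Longrightarrow> m \<in> {1, 2} \<Longrightarrow> finite (pop m s) \<and> pop m s \<noteq> {} \<and> pop m s \<subseteq> search_space n"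
  unfolding wf_state_def by auto

lemma wf_state_pop_1_incomparable:
  "wf_state n s \<Longrightarrow> z \<in> pop 1 s \<Longrightarrow> w \<in> pop 1 s \<Longrightarrow> z \<noteq> w \<Longrightarrow>
    F n 1 z \<noteq> F n 1 w \<and> \<not> dom n 1 z w"
  unfolding wf_state_def by simp

lemma wf_state_update:
  assumes wf: "wf_state n s" and m: "m \<in> {1, 2}" and x': "x' \<in> search_space n"
  shows "wf_state n (update n m x' s)"
proof (cases "accepts n m x' s")
  case False
  then have "update n m x' s = s" unfolding update_def accepts_def by auto
  then show ?thesis using wf by simp
next
  case True
  let ?s' = "update n m x' s"
  have pops: "\<forall>m'\<in>{1, 2}. finite (pop m' ?s') \<and> pop m' ?s' \<noteq> {} \<and> pop m' ?s' \<subseteq> search_space n"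
    using wf x' m by (auto simp: wf_state_def pop_update)
  have archive: "archive ?s' \<subseteq> search_space n"
    using wf x' archive_insert_subset[of n x' "archive s"] by (auto simp: wf_state_def archive_update True)
  have antichain: "\<forall>z\<in>pop 1 ?s'. \<forall>w\<in>pop 1 ?s'. z \<noteq> w \<longrightarrow> F n 1 z \<noteq> F n 1 w \<and> \<not> dom n 1 z w"
    using wf m True by (auto simp: wf_state_def pop_update accepts_def)
  have "replicate n True \<in> insert x' (archive s)" if "replicate n True \<in> pop 1 ?s'"
    using that wf m by (auto simp: wf_state_def pop_update split: if_splits)
  then have all_ones: "replicate n True \<in> pop 1 ?s' \<longrightarrow> replicate n True \<in> archive ?s'"
    using wf all_ones_mem_archive_insert by (auto simp: wf_state_def archive_update True)
  show ?thesis using pops archive antichain all_ones unfolding wf_state_def by blast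
qed

lemma set_pmf_party_step:
  assumes wf: "wf_state n s" and m: "m \<in> {1, 2}" and n: "n > 0"
  shows "set_pmf (party_step n m s) = (\<lambda>(x, i). update n m (x[i := \<not> x ! i]) s) ` (pop m s \<times> {..<n})"
proof -
  have "finite (pop m s)" "pop m s \<noteq> {}" using wf_state_pop[OF wf m] by auto
  moreover have "set_pmf (pmf_of_set {..<n}) = {..<n}" using n by (intro set_pmf_of_set) auto
  ultimately have "set_pmf (party_step n m s) =
      (\<Union>x\<in>pop m s. (\<lambda>i. update n m (x[i := \<not> x ! i]) s) ` {..<n})"
    unfolding party_step_def mutate_def by (simp add: image_image)
  then show ?thesis by auto
qed

lemma wf_state_party_step:
  assumes wf: "wf_state n s" and m: "m \<in> {1, 2}" and n: "n > 0"
    and s': "s' \<in> set_pmf (party_step n m s)"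
  shows "wf_state n s'"
proof -
  obtain x i where "x \<in> pop m s" "i < n" "s' = update n m (x[i := \<not> x ! i]) s"
    using s' set_pmf_party_step[OF wf m n] by auto
  moreover have "x[i := \<not> x ! i] \<in> search_space n" if "x \<in> pop m s" for x i
    using that wf_state_pop[OF wf m] by (auto simp: search_space_def)
  ultimately show ?thesis using wf_state_update[OF wf m] by blast
qed

lemma found_if_all_ones_mem_pop_1:
  "wf_state n s \<Longrightarrow> replicate n True \<in> pop 1 s \<Longrightarrow> found n s"
  using common_pareto_subset unfolding wf_state_def found_def by blast

lemma finite_search_space: "finite (search_space n)"
  using finite_lists_length_eq[of "UNIV :: bool set" n] unfolding search_space_def by simp

lemma search_space_nonempty: "search_space n \<noteq> {}"
  unfolding search_space_def by (metis (mono_tags) empty_iff length_replicate mem_Collect_eq)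

lemma wf_state_evals:
  assumes n: "n > 0" and p: "p \<in> set_pmf (evals n t)"
  shows "wf_state n (fst p) \<and> (found n (fst p) \<longrightarrow> snd p)"
  using p
proof (induction t arbitrary: p)
  case 0
  then obtain x where "x \<in> search_space n" "p = (({x}, {x}, {x}), found n ({x}, {x}, {x}))"
    using finite_search_space search_space_nonempty by auto
  then show ?case by (simp add: wf_state_def pop_def archive_def)
next
  case (Suc t)
  then obtain s h s' where sh: "(s, h) \<in> set_pmf (evals n t)"
    and s': "s' \<in> set_pmf (party_step n (if even t then 1 else 2) s)"
    and p: "p = (s', h \<or> found n s')"
    by auto
  have "wf_state n s" using Suc.IH[OF sh] by simp
  then have "wf_state n s'" using wf_state_party_step[OF _ _ n s'] by simp
  then show ?case using p by simp
qed

lemma card_pop_1_le: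
  assumes "wf_state n s"
  shows "card (pop 1 s) \<le> n - n div 2 + 1"
proof -
  have "inj_on (f11 n) (pop 1 s)"
  proof (rule inj_onI, rule ccontr)
    fix z w assume zw: "z \<in> pop 1 s" "w \<in> pop 1 s" "f11 n z = f11 n w" "z \<noteq> w"
    then have "F n 1 z \<noteq> F n 1 w" "\<not> dom n 1 z w" "\<not> dom n 1 w z"
      using wf_state_pop_1_incomparable[OF assms] by blast+
    then show False using zw(3) unfolding F_def dom_def weakly_dom_def by auto
  qed
  moreover have "f11 n ` pop 1 s \<subseteq> {..n - n div 2}" using f11_le by auto
  ultimately have "card (pop 1 s) \<le> card {..n - n div 2}" by (intro card_inj_on_le) auto
  then show ?thesis by simp
qed

section \<open>The potential\<close>

definition best_f22 :: "nat \<Rightarrow> bits set \<Rightarrow> nat" where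
  "best_f22 n P = Max (f22 n ` P)"

definition best_f11 :: "nat \<Rightarrow> bits set \<Rightarrow> nat" where
  "best_f11 n P =
     (if best_f22 n P = n div 2 then Max (f11 n ` {z \<in> P. f22 n z = n div 2}) else 0)"

lemma best_f22_le: "finite P \<Longrightarrow> P \<noteq> {} \<Longrightarrow> best_f22 n P \<le> n div 2"
  unfolding best_f22_def using f22_le by auto

lemma f22_le_best_f22: "finite P \<Longrightarrow> z \<in> P \<Longrightarrow> f22 n z \<le> best_f22 n P"
  unfolding best_f22_def by auto

lemma best_f22_attained: "finite P \<Longrightarrow> P \<noteq> {} \<Longrightarrow> \<exists>z\<in>P. f22 n z = best_f22 n P"
  unfolding best_f22_def by (metis (mono_tags, lifting) Max_in finite_imageI image_iff image_is_empty)

lemma f11_le_best_f11: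
  "finite P \<Longrightarrow> z \<in> P \<Longrightarrow> f22 n z = n div 2 \<Longrightarrow> f11 n z \<le> best_f11 n P"
  unfolding best_f11_def using f22_le_best_f22[of P z n] best_f22_le[of P n] by auto

lemma best_f11_attained:
  assumes "finite P" "P \<noteq> {}" "best_f22 n P = n div 2"
  shows "\<exists>z\<in>P. f22 n z = n div 2 \<and> f11 n z = best_f11 n P"
proof -
  have "{z \<in> P. f22 n z = n div 2} \<noteq> {}" using best_f22_attained[OF assms(1,2), of n] assms(3) by auto
  then have "best_f11 n P \<in> f11 n ` {z \<in> P. f22 n z = n div 2}"
    using assms unfolding best_f11_def by simp
  then show ?thesis by auto
qed

lemma best_f22_update_mono:
  assumes wf: "wf_state n s"
  shows "best_f22 n (pop 1 s) \<le> best_f22 n (pop 1 (update n 1 x' s))"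
proof -
  let ?P = "pop 1 s" and ?P' = "pop 1 (update n 1 x' s)"
  have fin: "finite ?P" "?P \<noteq> {}" "finite ?P'"
    using wf_state_pop[OF wf, of 1] by (auto simp: pop_update)
  obtain z where z: "z \<in> ?P" "f22 n z = best_f22 n ?P" using best_f22_attained[OF fin(1,2)] by blast
  have "z \<in> ?P' \<or> (x' \<in> ?P' \<and> dom n 1 x' z)" using z(1) by (auto simp: pop_update)
  then show ?thesis
    using z(2) f22_le_best_f22[OF fin(3)] f22_le_if_weakly_dom_1[of n x' z]
    unfolding dom_def by (metis order_trans)
qed

lemma best_f11_update_mono:
  assumes wf: "wf_state n s" and top: "best_f22 n (pop 1 s) = n div 2"
  shows "best_f22 n (pop 1 (update n 1 x' s)) = n div 2"
    and "best_f11 n (pop 1 s) \<le> best_f11 n (pop 1 (update n 1 x' s))"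
proof -
  let ?P = "pop 1 s" and ?P' = "pop 1 (update n 1 x' s)"
  have fin: "finite ?P" "?P \<noteq> {}" "finite ?P'" "?P' \<noteq> {}"
    using wf_state_pop[OF wf, of 1] by (auto simp: pop_update)
  show top': "best_f22 n ?P' = n div 2"
    using best_f22_update_mono[OF wf, of x'] best_f22_le[OF fin(3,4), of n] top by simp
  obtain z where z: "z \<in> ?P" "f22 n z = n div 2" "f11 n z = best_f11 n ?P"
    using best_f11_attained[OF fin(1,2) top] by blast
  have "z \<in> ?P'" using z(1,2) not_dom_1_if_f22_max by (auto simp: pop_update)
  then show "best_f11 n ?P \<le> best_f11 n ?P'" using f11_le_best_f11[OF fin(3) _ z(2)] z(3) by simp
qed

(* By card_pop_1_le, the factor 2 makes the expected decrease of the potential per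
   mutation of party 1 at least 2. *)
definition potential_scale :: "nat \<Rightarrow> real" where
  "potential_scale n = 2 * real (n * (n - n div 2 + 1))"

definition potential :: "nat \<Rightarrow> bits set \<Rightarrow> real" where
  "potential n P = potential_scale n *
     (harm (n div 2 - best_f22 n P) + harm (n - n div 2 - best_f11 n P))"

lemma potential_nonneg: "potential n P \<ge> 0"
  unfolding potential_def potential_scale_def by (simp add: harm_nonneg add_nonneg_nonneg)

lemma potential_scale_nonneg: "potential_scale n \<ge> 0"
  unfolding potential_scale_def by simp

lemma potential_le: "potential n P \<le> potential_scale n * (harm (n div 2) + harm (n - n div 2))"
  unfolding potential_def potential_scale_def by (intro mult_left_mono add_mono harm_mono) auto

lemma potential_update_mono:
  assumes "wf_state n s"
  shows "potential n (pop 1 (update n 1 x' s)) \<le> potential n (pop 1 s)"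
proof -
  have "best_f11 n (pop 1 (update n 1 x' s)) \<ge> best_f11 n (pop 1 s)"
    using best_f11_update_mono[OF assms] by (cases "best_f22 n (pop 1 s) = n div 2") (auto simp: best_f11_def)
  then show ?thesis
    using best_f22_update_mono[OF assms, of x'] unfolding potential_def potential_scale_def
    by (intro mult_left_mono add_mono harm_mono) auto
qed

lemma harm_le_harm_minus_inverse:
  assumes "j < k"
  shows "(harm j :: real) \<le> harm k - 1 / real k"
proof -
  have "harm k = harm (k - 1) + 1 / (real k :: real)"
    using assms harm_Suc[of "k - 1", where 'a=real] by (simp add: field_simps)
  moreover have "harm j \<le> (harm (k - 1) :: real)" using assms by (intro harm_mono) simp
  ultimately show ?thesis by simp
qed

lemma scaled_harm_sum_decrease:
  fixes c :: real
  assumes "c \<ge> 0" "a' < a" "b' \<le> b"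
  shows "c * (harm a' + harm b') \<le> c * (harm a + harm b) - c / real a"
proof -
  have "harm a' + harm b' \<le> harm a + harm b - 1 / real a"
    using harm_le_harm_minus_inverse[OF assms(2)] harm_mono[OF assms(3), where 'a=real] by linarith
  then have "c * (harm a' + harm b') \<le> c * (harm a + harm b - 1 / real a)"
    using assms(1) by (rule mult_left_mono)
  then show ?thesis by (simp add: algebra_simps)
qed

lemma potential_flip_first_half:
  assumes wf: "wf_state n s" and x: "x \<in> pop 1 s" "f22 n x = best_f22 n (pop 1 s)"
    and i: "i < n div 2" "\<not> x ! i"
  shows "potential n (pop 1 (update n 1 (x[i := True]) s))
    \<le> potential n (pop 1 s) - potential_scale n / real (n div 2 - best_f22 n (pop 1 s))"
proof -
  let ?P = "pop 1 s" and ?P' = "pop 1 (update n 1 (x[i := True]) s)" and ?A = "best_f22 n (pop 1 s)"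
  have fin: "finite ?P" "?P \<subseteq> search_space n" using wf_state_pop[OF wf, of 1] by auto
  have "length x = n" using x(1) fin(2) by (auto simp: search_space_def)
  note flip = flip_first_half[OF i(1) this i(2)]
  have low: "?A < n div 2" using flip(1) x(2) f22_le[of n "x[i := True]"] by simp
  have "accepts n 1 (x[i := True]) s"
    unfolding accepts_def
  proof
    assume "\<exists>z\<in>?P. dom n 1 z (x[i := True]) \<or> F n 1 z = F n 1 (x[i := True])"
    then obtain z where z: "z \<in> ?P" "weakly_dom n 1 z (x[i := True])"
      using weakly_dom_if_dom_or_F_eq by blast
    have "f22 n (x[i := True]) \<le> f22 n z" using z(2) by (rule f22_le_if_weakly_dom_1)
    then show False using f22_le_best_f22[OF fin(1) z(1), of n] flip(1) x(2) by simp
  qed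
  then have "x[i := True] \<in> ?P'" "finite ?P'" using fin(1) by (auto simp: pop_update)
  then have "?A < best_f22 n ?P'" using f22_le_best_f22[of ?P' "x[i := True]" n] flip(1) x(2) by simp
  moreover have "best_f11 n ?P = 0" using low by (simp add: best_f11_def)
  ultimately show ?thesis
    unfolding potential_def using low potential_scale_nonneg by (intro scaled_harm_sum_decrease) auto
qed

lemma potential_flip_second_half:
  assumes wf: "wf_state n s" and x: "x \<in> pop 1 s" "f22 n x = n div 2" "f11 n x = best_f11 n (pop 1 s)"
    and i: "n div 2 \<le> i" "i < n" "\<not> x ! i"
  shows "potential n (pop 1 (update n 1 (x[i := True]) s))
    \<le> potential n (pop 1 s) - potential_scale n / real (n - n div 2 - best_f11 n (pop 1 s))"
proof -
  let ?P = "pop 1 s" and ?P' = "pop 1 (update n 1 (x[i := True]) s)" and ?B = "best_f11 n (pop 1 s)"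
  have fin: "finite ?P" "?P \<subseteq> search_space n" using wf_state_pop[OF wf, of 1] by auto
  have "length x = n" using x(1) fin(2) by (auto simp: search_space_def)
  note flip = flip_second_half[OF i(1,2) this i(3)]
  have low: "?B < n - n div 2" using flip(1) x(3) f11_le[of n "x[i := True]"] by simp
  have top: "best_f22 n ?P = n div 2"
    using f22_le_best_f22[OF fin(1) x(1), of n] best_f22_le[of ?P n] fin(1) x by fastforce
  have "accepts n 1 (x[i := True]) s"
    unfolding accepts_def
  proof
    assume "\<exists>z\<in>?P. dom n 1 z (x[i := True]) \<or> F n 1 z = F n 1 (x[i := True])"
    then obtain z where z: "z \<in> ?P" "weakly_dom n 1 z (x[i := True])"
      using weakly_dom_if_dom_or_F_eq by blast
    have "f22 n (x[i := True]) \<le> f22 n z" using z(2) by (rule f22_le_if_weakly_dom_1)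
    then have "f22 n z = n div 2" using f22_le[of n z] flip(2) x(2) by simp
    then have "f11 n z \<le> ?B" using f11_le_best_f11[OF fin(1) z(1)] by simp
    then show False using z(2) flip(1) x(3) by (simp add: weakly_dom_def F_def)
  qed
  then have "x[i := True] \<in> ?P'" "finite ?P'" using fin(1) by (auto simp: pop_update)
  moreover note top' = best_f11_update_mono[OF wf top, of "x[i := True]"]
  ultimately have "?B < best_f11 n ?P'"
    using f11_le_best_f11[of ?P' "x[i := True]" n] flip x(2,3) by simp
  then show ?thesis
    unfolding potential_def using low top top'(1) potential_scale_nonneg
      scaled_harm_sum_decrease[of "potential_scale n" "n - n div 2 - best_f11 n ?P'"
        "n - n div 2 - ?B" 0 0]
    by (simp add: add.commute)
qed

lemma progress_first_half:
  assumes wf: "wf_state n s" and low: "best_f22 n (pop 1 s) < n div 2"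
  obtains x J where "x \<in> pop 1 s" "J \<subseteq> {..<n}" "J \<noteq> {}"
    "\<And>i. i \<in> J \<Longrightarrow> potential n (pop 1 (update n 1 (x[i := \<not> x ! i]) s))
        \<le> potential n (pop 1 s) - potential_scale n / real (card J)"
proof -
  have fin: "finite (pop 1 s)" "pop 1 s \<noteq> {}" using wf_state_pop[OF wf, of 1] by auto
  obtain x where x: "x \<in> pop 1 s" "f22 n x = best_f22 n (pop 1 s)"
    using best_f22_attained[OF fin] by metis
  define J where "J = {..<n div 2} \<inter> {i. \<not> x ! i}"
  have card_J: "card J = n div 2 - best_f22 n (pop 1 s)"
    using sum_of_bool_add_not[of "{..<n div 2}" "\<lambda>i. x ! i"] x(2) unfolding J_def f22_def
    by (simp only: sum_of_bool_eq finite_lessThan card_lessThan) simp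
  show ?thesis
  proof (rule that[OF x(1)])
    show "J \<subseteq> {..<n}" "J \<noteq> {}" using card_J low by (auto simp: J_def)
    show "potential n (pop 1 (update n 1 (x[i := \<not> x ! i]) s))
        \<le> potential n (pop 1 s) - potential_scale n / real (card J)" if "i \<in> J" for i
      using that potential_flip_first_half[OF wf x, of i] card_J by (simp add: J_def)
  qed
qed

lemma progress_second_half:
  assumes wf: "wf_state n s" and nf: "\<not> found n s" and top: "best_f22 n (pop 1 s) = n div 2"
  obtains x J where "x \<in> pop 1 s" "J \<subseteq> {..<n}" "J \<noteq> {}"
    "\<And>i. i \<in> J \<Longrightarrow> potential n (pop 1 (update n 1 (x[i := \<not> x ! i]) s))
        \<le> potential n (pop 1 s) - potential_scale n / real (card J)"
proof -
  let ?B = "best_f11 n (pop 1 s)"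
  have fin: "finite (pop 1 s)" "pop 1 s \<noteq> {}" "pop 1 s \<subseteq> search_space n"
    using wf_state_pop[OF wf, of 1] by auto
  obtain x where x: "x \<in> pop 1 s" "f22 n x = n div 2" "f11 n x = ?B"
    using best_f11_attained[OF fin(1,2) top] by blast
  have "length x = n" using x(1) fin(3) by (auto simp: search_space_def)
  then have low: "?B < n - n div 2"
    using x f11_le[of n x] f22_f11_max_iff_all_ones found_if_all_ones_mem_pop_1[OF wf] nf
    by (metis le_neq_implies_less)
  define J where "J = {n div 2..<n} \<inter> {i. \<not> x ! i}"
  have card_J: "card J = n - n div 2 - ?B"
    using sum_of_bool_add_not[of "{n div 2..<n}" "\<lambda>i. x ! i"] x(3) unfolding J_def f11_def
    by (simp only: sum_of_bool_eq finite_atLeastLessThan card_atLeastLessThan) simp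
  show ?thesis
  proof (rule that[OF x(1)])
    show "J \<subseteq> {..<n}" "J \<noteq> {}" using card_J low by (auto simp: J_def)
    show "potential n (pop 1 (update n 1 (x[i := \<not> x ! i]) s))
        \<le> potential n (pop 1 s) - potential_scale n / real (card J)" if "i \<in> J" for i
      using that potential_flip_second_half[OF wf x, of i] card_J by (simp add: J_def)
  qed
qed

lemma progress:
  assumes wf: "wf_state n s" and nf: "\<not> found n s"
  obtains x J where "x \<in> pop 1 s" "J \<subseteq> {..<n}" "J \<noteq> {}"
    "\<And>i. i \<in> J \<Longrightarrow> potential n (pop 1 (update n 1 (x[i := \<not> x ! i]) s))
        \<le> potential n (pop 1 s) - potential_scale n / real (card J)"
proof (cases "best_f22 n (pop 1 s) < n div 2")
  case True
  then show ?thesis using progress_first_half[OF wf] that by blast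
next
  case False
  then have "best_f22 n (pop 1 s) = n div 2"
    using best_f22_le[of "pop 1 s" n] wf_state_pop[OF wf, of 1] by simp
  then show ?thesis using progress_second_half[OF wf nf] that by blast
qed

section \<open>Additive drift\<close>

lemma sum_le_of_deficit:
  fixes \<phi> :: "'a \<Rightarrow> 'b \<Rightarrow> real"
  assumes "finite P" "x \<in> P" "finite I" "J \<subseteq> I" "J \<noteq> {}"
    and le: "\<And>y i. y \<in> P \<Longrightarrow> i \<in> I \<Longrightarrow> \<phi> y i \<le> G"
    and deficit: "\<And>i. i \<in> J \<Longrightarrow> \<phi> x i \<le> G - d / real (card J)"
  shows "(\<Sum>y\<in>P. \<Sum>i\<in>I. \<phi> y i) \<le> real (card P) * real (card I) * G - d"
proof -
  have "finite J" using assms(3,4) finite_subset by blast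
  then have "d = (\<Sum>i\<in>J. d / real (card J))" using assms(5) by simp
  also have "\<dots> \<le> (\<Sum>i\<in>J. G - \<phi> x i)" using deficit by (intro sum_mono) force
  also have "\<dots> \<le> (\<Sum>i\<in>I. G - \<phi> x i)" using assms(2-4) le by (intro sum_mono2) auto
  also have "\<dots> \<le> (\<Sum>y\<in>P. \<Sum>i\<in>I. G - \<phi> y i)"
    using assms(1,2) le by (intro member_le_sum[where f = "\<lambda>y. \<Sum>i\<in>I. G - \<phi> y i"] sum_nonneg) auto
  also have "\<dots> = real (card P) * real (card I) * G - (\<Sum>y\<in>P. \<Sum>i\<in>I. \<phi> y i)"
    by (simp add: sum_subtractf sum_distrib_left)
  finally show ?thesis by simp
qed

lemma nn_integral_pmf_of_set_real:
  assumes "finite S" "S \<noteq> {}" "\<And>x. x \<in> S \<Longrightarrow> f x \<ge> 0"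
  shows "(\<integral>\<^sup>+x. ennreal (f x) \<partial>measure_pmf (pmf_of_set S)) = ennreal (sum f S / real (card S))"
proof -
  have "(\<integral>\<^sup>+x. ennreal (f x) \<partial>measure_pmf (pmf_of_set S)) = ennreal (sum f S) / ennreal (real (card S))"
    using assms by (simp add: nn_integral_pmf_of_set ennreal_of_nat_eq_real_of_nat)
  also have "\<dots> = ennreal (sum f S / real (card S))"
    using assms by (intro divide_ennreal) (auto intro: sum_nonneg simp: card_gt_0_iff)
  finally show ?thesis .
qed

lemma nn_integral_party_step:
  assumes wf: "wf_state n s" and m: "m \<in> {1, 2}" and n: "n > 0" and f: "\<And>s'. f s' \<ge> 0"
  shows "(\<integral>\<^sup>+s'. ennreal (f s') \<partial>measure_pmf (party_step n m s)) = ennreal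
    ((\<Sum>x\<in>pop m s. \<Sum>i<n. f (update n m (x[i := \<not> x ! i]) s)) / (real n * real (card (pop m s))))"
proof -
  have P: "finite (pop m s)" "pop m s \<noteq> {}" using wf_state_pop[OF wf m] by auto
  have "(\<integral>\<^sup>+s'. ennreal (f s') \<partial>measure_pmf (party_step n m s)) =
     (\<integral>\<^sup>+x. (\<integral>\<^sup>+i. ennreal (f (update n m (x[i := \<not> x ! i]) s)) \<partial>measure_pmf (pmf_of_set {..<n}))
       \<partial>measure_pmf (pmf_of_set (pop m s)))"
    unfolding party_step_def mutate_def by simp
  also have "\<dots> = (\<integral>\<^sup>+x. ennreal ((\<Sum>i<n. f (update n m (x[i := \<not> x ! i]) s)) / real n)
       \<partial>measure_pmf (pmf_of_set (pop m s)))"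
    using n f by (intro nn_integral_cong, subst nn_integral_pmf_of_set_real) auto
  also have "\<dots> = ennreal ((\<Sum>x\<in>pop m s. (\<Sum>i<n. f (update n m (x[i := \<not> x ! i]) s)) / real n)
       / real (card (pop m s)))"
    using P by (intro nn_integral_pmf_of_set_real divide_nonneg_nonneg sum_nonneg f) auto
  finally show ?thesis by (simp add: sum_divide_distrib mult.commute)
qed

lemma potential_drift:
  assumes wf: "wf_state n s" and nf: "\<not> found n s" and n: "n > 0"
  shows "(\<integral>\<^sup>+s'. ennreal (potential n (pop 1 s')) \<partial>measure_pmf (party_step n 1 s)) + 2
    \<le> ennreal (potential n (pop 1 s))"
proof -
  let ?P = "pop 1 s" and ?c = "real n * real (card (pop 1 s))"
  let ?sum = "\<Sum>x\<in>?P. \<Sum>i<n. potential n (pop 1 (update n 1 (x[i := \<not> x ! i]) s))"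
  have fin: "finite ?P" "?P \<noteq> {}" using wf_state_pop[OF wf, of 1] by auto
  obtain x J where "x \<in> ?P" "J \<subseteq> {..<n}" "J \<noteq> {}"
    "\<And>i. i \<in> J \<Longrightarrow> potential n (pop 1 (update n 1 (x[i := \<not> x ! i]) s))
        \<le> potential n ?P - potential_scale n / real (card J)"
    using progress[OF wf nf] by blast
  then have "?sum \<le> real (card ?P) * real (card {..<n}) * potential n ?P - potential_scale n"
    using fin potential_update_mono[OF wf] by (intro sum_le_of_deficit) auto
  moreover have "n * card ?P \<le> n * (n - n div 2 + 1)"
    using card_pop_1_le[OF wf] by (rule mult_left_mono) simp
  then have "real (n * card ?P) \<le> real (n * (n - n div 2 + 1))" by (simp only: of_nat_le_iff)
  then have "2 * ?c \<le> potential_scale n" unfolding potential_scale_def by simp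
  ultimately have "?sum \<le> (potential n ?P - 2) * ?c" by (simp add: algebra_simps)
  moreover have "?c > 0" using n fin by (simp add: card_gt_0_iff)
  ultimately have "?sum / ?c \<le> potential n ?P - 2" by (simp add: pos_divide_le_eq)
  then have avg: "?sum / ?c + 2 \<le> potential n ?P" by simp
  have "?sum / ?c \<ge> 0" by (intro divide_nonneg_nonneg sum_nonneg potential_nonneg) auto
  then have "ennreal (?sum / ?c) + 2 = ennreal (?sum / ?c + 2)"
    using ennreal_plus[of "?sum / ?c" 2] by simp
  also have "\<dots> \<le> ennreal (potential n ?P)" using avg by (rule ennreal_leI)
  finally have "ennreal (?sum / ?c) + 2 \<le> ennreal (potential n ?P)" .
  then show ?thesis using nn_integral_party_step[OF wf _ n potential_nonneg] by simp
qed

lemma pop_1_party_step_2: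
  assumes "wf_state n s" "n > 0" "s' \<in> set_pmf (party_step n 2 s)"
  shows "pop 1 s' = pop 1 s"
  using assms set_pmf_party_step[of n s 2] by (auto simp: pop_update)

(* Bounds the expected number of evaluations still to come after t evaluations; the
   summand of_bool (odd t) pays for the pending mutation of party 2. *)
definition pending_cost :: "nat \<Rightarrow> nat \<Rightarrow> state \<times> bool \<Rightarrow> ennreal" where
  "pending_cost n t p =
     (if snd p then 0 else ennreal (potential n (pop 1 (fst p))) + of_bool (odd t))"

lemma pending_cost_step:
  assumes n: "n > 0" and wf: "wf_state n s" and flag: "found n s \<longrightarrow> h"
  shows "(\<integral>\<^sup>+s'. pending_cost n (Suc t) (s', h \<or> found n s')
            \<partial>measure_pmf (party_step n (if even t then 1 else 2) s)) + of_bool (\<not> h)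
    \<le> pending_cost n t (s, h)"
proof (cases h)
  case True
  then show ?thesis by (simp add: pending_cost_def)
next
  case False
  let ?pot = "\<lambda>s. ennreal (potential n (pop 1 s))"
  let ?I = "\<lambda>m. \<integral>\<^sup>+s'. pending_cost n (Suc t) (s', h \<or> found n s') \<partial>measure_pmf (party_step n m s)"
  show ?thesis
  proof (cases "even t")
    case True
    have "?I 1 \<le> (\<integral>\<^sup>+s'. ?pot s' + 1 \<partial>measure_pmf (party_step n 1 s))"
      using True by (intro nn_integral_mono) (simp add: pending_cost_def)
    also have "\<dots> = (\<integral>\<^sup>+s'. ?pot s' \<partial>measure_pmf (party_step n 1 s)) + 1"
      by (simp add: nn_integral_add measure_pmf.emeasure_space_1)
    finally have "?I 1 + 1 \<le> (\<integral>\<^sup>+s'. ?pot s' \<partial>measure_pmf (party_step n 1 s)) + 1 + 1"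
      by (rule add_right_mono)
    also have "\<dots> = (\<integral>\<^sup>+s'. ?pot s' \<partial>measure_pmf (party_step n 1 s)) + 2"
      by (simp add: add.assoc one_add_one)
    also have "\<dots> \<le> ?pot s" using potential_drift[OF wf _ n] flag False by simp
    finally show ?thesis using True False by (simp add: pending_cost_def)
  next
    case odd: False
    have "?I 2 \<le> (\<integral>\<^sup>+s'. ?pot s \<partial>measure_pmf (party_step n 2 s))"
      using odd pop_1_party_step_2[OF wf n]
      by (intro nn_integral_mono_AE AE_pmfI) (simp add: pending_cost_def)
    also have "\<dots> = ?pot s" by (simp add: measure_pmf.emeasure_space_1)
    finally have "?I 2 + 1 \<le> ?pot s + 1" by (rule add_right_mono)
    then show ?thesis using odd False by (simp add: pending_cost_def)
  qed
qed

lemma expected_pending_cost_step: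
  assumes n: "n > 0"
  shows "(\<integral>\<^sup>+p. pending_cost n (Suc t) p \<partial>measure_pmf (evals n (Suc t)))
      + emeasure (measure_pmf (evals n t)) {p. \<not> snd p}
    \<le> (\<integral>\<^sup>+p. pending_cost n t p \<partial>measure_pmf (evals n t))"
proof -
  define next_cost where "next_cost p = (\<integral>\<^sup>+s'. pending_cost n (Suc t) (s', snd p \<or> found n s')
      \<partial>measure_pmf (party_step n (if even t then 1 else 2) (fst p)))" for p
  have "(\<integral>\<^sup>+p. pending_cost n (Suc t) p \<partial>measure_pmf (evals n (Suc t)))
      + emeasure (measure_pmf (evals n t)) {p. \<not> snd p}
    = (\<integral>\<^sup>+p. next_cost p + indicator {p. \<not> snd p} p \<partial>measure_pmf (evals n t))"
    unfolding next_cost_def by (simp add: case_prod_unfold nn_integral_add)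
  also have "\<dots> \<le> (\<integral>\<^sup>+p. pending_cost n t p \<partial>measure_pmf (evals n t))"
  proof (intro nn_integral_mono_AE AE_pmfI)
    fix p assume "p \<in> set_pmf (evals n t)"
    with wf_state_evals[OF n] pending_cost_step[OF n, of "fst p" "snd p" t]
    show "next_cost p + indicator {p. \<not> snd p} p \<le> pending_cost n t p"
      by (simp add: next_cost_def indicator_def of_bool_def)
  qed
  finally show ?thesis .
qed

lemma suminf_le_telescoping:
  fixes a d :: "nat \<Rightarrow> ennreal"
  assumes step: "\<And>t. d (Suc t) + a t \<le> d t"
  shows "(\<Sum>t. a t) \<le> d 0"
proof -
  have partial: "d N + (\<Sum>t<N. a t) \<le> d 0" for N
  proof (induction N)
    case (Suc N)
    have "d (Suc N) + (\<Sum>t<Suc N. a t) = (d (Suc N) + a N) + (\<Sum>t<N. a t)"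
      by (simp add: add_ac)
    also have "\<dots> \<le> d N + (\<Sum>t<N. a t)" using step by (rule add_right_mono)
    also have "\<dots> \<le> d 0" by (rule Suc.IH)
    finally show ?case .
  qed simp
  show ?thesis
    unfolding suminf_eq_SUP using partial by (intro SUP_least) (metis add_increasing zero_le order_refl order_trans)
qed

lemma potential_max_le:
  assumes "n \<ge> 3" "even n"
  shows "potential_scale n * (harm (n div 2) + harm (n - n div 2)) \<le> 8 * real n ^ 2 * ln (real n)"
proof -
  define h where "h = n div 2"
  have h: "n - h = h" "real n = 2 * real h" "h \<ge> 1" using assms by (auto simp: h_def)
  have "1 \<le> ln (real n)"
    using assms exp_le by (subst ln_ge_iff) auto
  moreover have "harm h \<le> 1 + ln (real h)"
    using euler_mascheroni_sequence_decreasing[of 1 h] h(3) by (simp add: harm_def)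
  moreover have "ln (real h) \<le> ln (real n)" using h by simp
  ultimately have harm: "harm h \<le> 2 * ln (real n)" by linarith
  have "potential_scale n * (harm (n div 2) + harm (n - n div 2)) = 4 * (real n * real (h + 1)) * harm h"
    unfolding potential_scale_def h_def[symmetric] h(1) by (simp add: algebra_simps)
  also have "\<dots> \<le> 4 * (real n * real n) * (2 * ln (real n))"
    using h harm harm_nonneg[of h] by (intro mult_mono mult_left_mono) auto
  also have "\<dots> = 8 * real n ^ 2 * ln (real n)" by (simp add: power2_eq_square)
  finally show ?thesis .
qed

theorem theorem1:
  "\<exists>C N. \<forall>n\<ge>N. even n \<longrightarrow>
      expected_runtime n \<le> ennreal (C * real n ^ 2 * ln (real n))"
proof (intro exI allI impI)
  fix n :: nat assume n: "n \<ge> 3" "even n"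
  let ?bound = "potential_scale n * (harm (n div 2) + harm (n - n div 2))"
  have "expected_runtime n \<le> (\<integral>\<^sup>+p. pending_cost n 0 p \<partial>measure_pmf (evals n 0))"
    unfolding expected_runtime_def using n expected_pending_cost_step[of n]
    by (intro suminf_le_telescoping) (simp add: measure_pmf.emeasure_eq_measure)
  also have "\<dots> \<le> (\<integral>\<^sup>+p. ennreal ?bound \<partial>measure_pmf (evals n 0))"
    using potential_le by (intro nn_integral_mono) (simp add: pending_cost_def ennreal_leI)
  also have "\<dots> \<le> ennreal (8 * real n ^ 2 * ln (real n))"
    using potential_max_le[OF n] by (simp add: measure_pmf.emeasure_space_1 ennreal_leI)
  finally show "expected_runtime n \<le> ennreal (8 * real n ^ 2 * ln (real n))" .
qed

end
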